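(* Let $\tau\in(0,1]$, suppose $k\,\alpha^{(2-\tau)d}\ge 2$, and let $\beta\ge 1$ be an integer. Run $\beta$ independent copies of the Fast-Filter model described in the context (with independent randomness), producing survival sets $S^{(j)}_1,\dots,S^{(j)}_k$ for $j=1,\dots,\beta$. Call a pair of distinct $u,v\in V$ close if $|\Gamma(u)\cap\Gamma(v)|\ge\tau d$, and say it is found if there exist $j\in[\beta]$ and $i\in[k]$ with $u,v\in S^{(j)}_i$. (a) For each close pair, the probability that it is not found is at most $2^{-\beta}$. (b) If $N\ge 2$ and $\beta\ge 3\log_2 N$, then with probability at least $1-1/N$ every close pair is found.
   Context: Let $G=(U,V,E)$ be a bipartite graph with $|U|=M$ and $|V|=N$. For $v\in V$ let $\Gamma(v)\subseteq U$ be its set of neighbours, and assume $|\Gamma(v)|=d\ge 1$ for every $v\in V$. Let $k=2^{m}$ and $\alpha=2^{-r}$, where $m,r$ are positive integers. Identify $[k]=\{1,\dots,k\}$ bijectively with the vector space $\mathrm{GF}(2)^m$ (for instance via the binary representation of $i-1$). Fast-Filter model: for each $u\in U$, independently draw a uniformly random matrix $A'_u\in\mathrm{GF}(2)^{r\times m}$ and a uniformly random vector $b'_u\in\mathrm{GF}(2)^{r}$; all of these are mutually independent. For $v\in V$, let $A^v$ be the $(dr)\times m$ matrix obtained by stacking the matrices $A'_u$, $u\in\Gamma(v)$, in a fixed order, and let $b^v\in\mathrm{GF}(2)^{dr}$ be obtained by stacking the $b'_u$, $u\in\Gamma(v)$, in the same order. For $i\in[k]$ (viewed as a vector in $\mathrm{GF}(2)^m$),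 the survival set is $S_i=\{v\in V: A^v i+b^v=0\}$, with arithmetic over $\mathrm{GF}(2)$. *)

theory Defs
  imports "HOL-Probability.Probability" "HOL-Library.Z2"
begin

text \<open>An outcome of beta independent copies of the Fast-Filter model is a function
  omega with omega j u = (A'_u, b'_u) for copy j < beta and u in U, where
  A'_u is an r x m matrix (entries indexed by s < r, t < m) and b'_u an r-vector.\<close>

type_synonym ('u) ff_outcome = "nat \<Rightarrow> 'u \<Rightarrow> (nat \<Rightarrow> nat \<Rightarrow> bit) \<times> (nat \<Rightarrow> bit)"

definition ff_space :: "nat \<Rightarrow> nat \<Rightarrow> nat \<Rightarrow> 'u set \<Rightarrow> 'u ff_outcome set" where
  "ff_space beta r m U =
     PiE {..<beta} (\<lambda>_. PiE U (\<lambda>_.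
        PiE {..<r} (\<lambda>_. PiE {..<m} (\<lambda>_. UNIV)) \<times> PiE {..<r} (\<lambda>_. UNIV)))"

text \<open>Uniform distribution on the outcome space = all entries independent uniform in GF(2).\<close>
definition ff_pmf :: "nat \<Rightarrow> nat \<Rightarrow> nat \<Rightarrow> 'u set \<Rightarrow> 'u ff_outcome pmf" where
  "ff_pmf beta r m U = pmf_of_set (ff_space beta r m U)"

text \<open>Identification of i in [k] with the vector in GF(2)^m given by the binary
  representation of i - 1 (coordinate t is bit t).\<close>
definition index_vec :: "nat \<Rightarrow> nat \<Rightarrow> bit" where
  "index_vec i t = of_bool (bit (i - 1) t)"

text \<open>Survival set S_i of copy j: v survives iff A^v i + b^v = 0, i.e. every
  stacked block A'_u i + b'_u (u in Gamma v) vanishes.\<close>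
definition surv_set ::
  "'v set \<Rightarrow> ('v \<Rightarrow> 'u set) \<Rightarrow> nat \<Rightarrow> nat \<Rightarrow> 'u ff_outcome \<Rightarrow> nat \<Rightarrow> nat \<Rightarrow> 'v set" where
  "surv_set V \<Gamma> r m \<omega> j i =
     {v \<in> V. \<forall>u \<in> \<Gamma> v. \<forall>s < r.
        (\<Sum>t<m. fst (\<omega> j u) s t * index_vec i t) + snd (\<omega> j u) s = 0}"

definition close_pair :: "('v \<Rightarrow> 'u set) \<Rightarrow> real \<Rightarrow> nat \<Rightarrow> 'v \<Rightarrow> 'v \<Rightarrow> bool" where
  "close_pair \<Gamma> \<tau> d u v \<longleftrightarrow> u \<noteq> v \<and> real (card (\<Gamma> u \<inter> \<Gamma> v)) \<ge> \<tau> * real d"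

definition found ::
  "'v set \<Rightarrow> ('v \<Rightarrow> 'u set) \<Rightarrow> nat \<Rightarrow> nat \<Rightarrow> nat \<Rightarrow> 'u ff_outcome \<Rightarrow> 'v \<Rightarrow> 'v \<Rightarrow> bool" where
  "found V \<Gamma> beta r m \<omega> u v \<longleftrightarrow>
     (\<exists>j < beta. \<exists>i \<in> {1..2^m}. u \<in> surv_set V \<Gamma> r m \<omega> j i \<and> v \<in> surv_set V \<Gamma> r m \<omega> j i)"

end

theory Submission
  imports Defs
begin

text \<open>Fix a close pair u, v and put W = \<Gamma>(u) \<union> \<Gamma>(v), so |W| \<le> (2 - \<tau>) d. In one copy, u and v
  both survive in S_i exactly when the blocks (A'_w, b'_w) of all w \<in> W vanish at i. For fixed i this
  has probability p = 2^(-r|W|) with k p \<ge> 2, and for i \<noteq> i' the two events are independent,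
  because i and i' differ in some coordinate and flipping the matching column entry of a row of A'_w
  toggles exactly one of the two conditions. The second moment method then shows that no index
  survives with probability at most 1/(k p) \<le> 1/2; the \<beta> independent copies give 2^(-\<beta>), and a
  union bound over at most N^2 close pairs gives failure probability N^2 2^(-\<beta>) \<le> 1/N.\<close>

lemma card_PiE_constrained:
  fixes q :: real
  assumes "finite U" "W \<subseteq> U" "finite R" "card (R \<inter> F) = card R * q"
  shows "card (PiE U (\<lambda>_. R) \<inter> {x. \<forall>w\<in>W. x w \<in> F}) = card (PiE U (\<lambda>_. R)) * q ^ card W"
proof -
  have W: "finite W" "card W + card (U - W) = card U"
    using assms(1,2) by (auto intro: finite_subset simp: card_Diff_subset card_mono finite_subset)
  have "PiE U (\<lambda>_. R) \<inter> {x. \<forall>w\<in>W. x w \<in> F} = PiE U (\<lambda>w. if w \<in> W then R \<inter> F else R)"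
    using assms(2) by (force simp: PiE_iff split: if_splits)
  then have "card (PiE U (\<lambda>_. R) \<inter> {x. \<forall>w\<in>W. x w \<in> F}) = card (R \<inter> F) ^ card W * card R ^ card (U - W)"
    using assms(1,2) by (simp add: card_PiE prod.If_cases if_distrib Int_absorb1 Diff_eq)
  also have "real \<dots> = card R ^ (card W + card (U - W)) * q ^ card W"
    by (simp add: assms(4) power_mult_distrib power_add)
  finally show ?thesis
    using W assms(1) by (simp add: card_PiE)
qed

lemma prob_pmf_of_set_PiE_all:
  assumes "finite J" "finite S" "S \<noteq> {}"
  shows "measure_pmf.prob (pmf_of_set (PiE J (\<lambda>_. S))) {\<omega>. \<forall>j\<in>J. \<omega> j \<in> B}
           = (card (S \<inter> B) / card S) ^ card J"
proof -
  have "card S > 0"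
    using assms(2,3) by (simp add: card_gt_0_iff)
  then have "card (PiE J (\<lambda>_. S) \<inter> {\<omega>. \<forall>j\<in>J. \<omega> j \<in> B})
      = card (PiE J (\<lambda>_. S)) * (card (S \<inter> B) / card S) ^ card J"
    by (intro card_PiE_constrained[OF assms(1) order_refl assms(2)]) simp
  moreover have "PiE J (\<lambda>_. S) \<noteq> {}" "finite (PiE J (\<lambda>_. S))"
    using assms by (simp_all add: PiE_eq_empty_iff finite_PiE)
  ultimately show ?thesis
    by (simp add: measure_pmf_of_set card_gt_0_iff)
qed

lemma sum_square_hit_count:
  fixes p :: real
  assumes "finite S" "finite I"
    and single: "\<And>i. i \<in> I \<Longrightarrow> card (S \<inter> E i) = card S * p"
    and pair: "\<And>i i'. i \<in> I \<Longrightarrow> i' \<in> I \<Longrightarrow> i \<noteq> i' \<Longrightarrow> card (S \<inter> E i \<inter> E i') = card S * p\<^sup>2"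
  shows "(\<Sum>x\<in>S. (\<Sum>i\<in>I. of_bool (x \<in> E i))\<^sup>2)
           = real (card I) * card S * p + card I * (real (card I) - 1) * card S * p\<^sup>2"
proof -
  have row: "(\<Sum>i'\<in>I. real (card (S \<inter> E i \<inter> E i'))) = card S * p + (real (card I) - 1) * card S * p\<^sup>2"
    if i: "i \<in> I" for i
  proof -
    have "(\<Sum>i'\<in>I. real (card (S \<inter> E i \<inter> E i')))
        = card (S \<inter> E i) + (\<Sum>i'\<in>I - {i}. real (card (S \<inter> E i \<inter> E i')))"
      using assms(2) i by (simp add: sum.remove)
    also have "(\<Sum>i'\<in>I - {i}. real (card (S \<inter> E i \<inter> E i'))) = (\<Sum>i'\<in>I - {i}. card S * p\<^sup>2)"
      by (rule sum.cong) (use i pair in auto)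
    moreover have "card I \<ge> 1"
      using assms(2) i by (metis One_nat_def Suc_leI card_gt_0_iff empty_iff)
    ultimately show ?thesis
      using assms(2) i by (simp add: single of_nat_diff)
  qed
  have "(\<Sum>x\<in>S. (\<Sum>i\<in>I. of_bool (x \<in> E i))\<^sup>2)
      = (\<Sum>x\<in>S. \<Sum>i\<in>I. \<Sum>i'\<in>I. of_bool (x \<in> E i \<inter> E i') :: real)"
    by (simp add: power2_eq_square sum_product of_bool_conj)
  also have "\<dots> = (\<Sum>i\<in>I. \<Sum>i'\<in>I. \<Sum>x\<in>S. of_bool (x \<in> E i \<inter> E i'))"
    by (subst sum.swap) (rule sum.cong[OF refl], rule sum.swap)
  also have "\<dots> = (\<Sum>i\<in>I. \<Sum>i'\<in>I. real (card (S \<inter> E i \<inter> E i')))"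
    using assms(1) by (simp add: Int_def)
  also have "\<dots> = (\<Sum>i\<in>I. card S * p + (real (card I) - 1) * card S * p\<^sup>2)"
    by (rule sum.cong) (simp_all add: row)
  finally show ?thesis by (simp add: algebra_simps)
qed

lemma card_avoiding_pairwise_independent:
  fixes p :: real
  assumes "finite S" "finite I" "I \<noteq> {}" "p > 0"
    and single: "\<And>i. i \<in> I \<Longrightarrow> card (S \<inter> E i) = card S * p"
    and pair: "\<And>i i'. i \<in> I \<Longrightarrow> i' \<in> I \<Longrightarrow> i \<noteq> i' \<Longrightarrow> card (S \<inter> E i \<inter> E i') = card S * p\<^sup>2"
  shows "card {x\<in>S. \<forall>i\<in>I. x \<notin> E i} \<le> card S / (card I * p)"
proof -
  define n k where "n = real (card S)" and "k = real (card I)"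
  define c where "c = k * p"
  define X where "X x = (\<Sum>i\<in>I. of_bool (x \<in> E i) :: real)" for x
  have "k > 0" using assms(2,3) by (simp add: k_def card_gt_0_iff)
  then have c: "c > 0" using \<open>p > 0\<close> by (simp add: c_def)
  have first: "(\<Sum>x\<in>S. X x) = k * n * p"
  proof -
    have "(\<Sum>x\<in>S. X x) = (\<Sum>i\<in>I. real (card (S \<inter> E i)))"
      using assms(1) unfolding X_def by (subst sum.swap) (simp add: Int_def)
    also have "\<dots> = k * n * p" by (simp add: single k_def n_def)
    finally show ?thesis .
  qed
  have second: "(\<Sum>x\<in>S. (X x)\<^sup>2) = k * n * p + k * (k - 1) * n * p\<^sup>2"
    unfolding X_def k_def n_def by (rule sum_square_hit_count[OF assms(1,2) single pair])
  \<comment> \<open>Chebyshev: a point hit by none of the events has hit count 0, at distance c from its mean.\<close>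
  have "card {x\<in>S. \<forall>i\<in>I. x \<notin> E i} = (\<Sum>x\<in>S. of_bool (\<forall>i\<in>I. x \<notin> E i) :: real)"
    using assms(1) by (simp add: Int_def)
  also have "\<dots> \<le> (\<Sum>x\<in>S. (X x - c)\<^sup>2 / c\<^sup>2)"
    using c by (intro sum_mono) (auto simp: X_def)
  also have "\<dots> = ((\<Sum>x\<in>S. (X x)\<^sup>2) - 2 * c * (\<Sum>x\<in>S. X x) + n * c\<^sup>2) / c\<^sup>2"
    by (simp add: sum_divide_distrib[symmetric] power2_diff sum.distrib sum_subtractf
        sum_distrib_left[symmetric] sum_distrib_right[symmetric] n_def algebra_simps)
  also have "\<dots> = n * (k * p - k * p\<^sup>2) / c\<^sup>2"
    by (simp only: first second) (simp add: c_def power2_eq_square algebra_simps)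
  also have "\<dots> \<le> n * c / c\<^sup>2"
    using \<open>p > 0\<close> \<open>k > 0\<close> by (intro divide_right_mono mult_left_mono) (auto simp: n_def c_def)
  also have "\<dots> = card S / (card I * p)"
    by (simp add: power2_eq_square n_def c_def k_def)
  finally show ?thesis .
qed

(* Keep GF(2) arithmetic in ring form rather than rewriting it to xor/and. *)
declare add_bit_eq_xor [simp del] mult_bit_eq_and [simp del]

lemma UNIV_bit: "(UNIV :: bit set) = {0, 1}"
  by (auto intro: bit.exhaust)

lemma card_UNIV_bit: "card (UNIV :: bit set) = 2"
  by (simp add: UNIV_bit)

lemma bit_add_eq_0_iff: "(a::bit) + b = 0 \<longleftrightarrow> a = b"
  by (cases a; cases b) simp_all

abbreviation gf2_dot :: "nat \<Rightarrow> (nat \<Rightarrow> bit) \<Rightarrow> (nat \<Rightarrow> bit) \<Rightarrow> bit" where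
  "gf2_dot m a y \<equiv> \<Sum>t<m. a t * y t"

definition gf2_vectors :: "nat \<Rightarrow> (nat \<Rightarrow> bit) set" where
  "gf2_vectors m = PiE {..<m} (\<lambda>_. UNIV)"

lemma finite_gf2_vectors: "finite (gf2_vectors m)"
  by (simp add: gf2_vectors_def finite_PiE UNIV_bit)

lemma card_gf2_vectors: "card (gf2_vectors m) = 2 ^ m"
  by (simp add: gf2_vectors_def card_PiE card_UNIV_bit)

lemma gf2_dot_flip:
  assumes "t0 < m"
  shows "gf2_dot m (a(t0 := a t0 + 1)) y = gf2_dot m a y + y t0"
proof -
  have "gf2_dot m (a(t0 := a t0 + 1)) y = (a t0 + 1) * y t0 + (\<Sum>t\<in>{..<m} - {t0}. a t * y t)"
    using assms by (simp add: sum.remove)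
  also have "\<dots> = gf2_dot m a y + y t0"
    using assms by (simp add: sum.remove distrib_right)
  finally show ?thesis .
qed

text \<open>Flipping coordinate t0 toggles \<open>a \<cdot> y + a \<cdot> y'\<close>, so it swaps the vectors on which the
  two products agree with those on which they differ.\<close>
lemma card_gf2_dot_agree:
  assumes "t0 < m" "y t0 \<noteq> y' t0"
  shows "2 * card {a \<in> gf2_vectors m. gf2_dot m a y = gf2_dot m a y'} = 2 ^ m"
proof -
  define Z where "Z = {a \<in> gf2_vectors m. gf2_dot m a y = gf2_dot m a y'}"
  define flip where "flip a = a(t0 := a t0 + 1)" for a :: "nat \<Rightarrow> bit"
  have "y t0 + y' t0 = 1"
    using assms(2) by (cases "y t0"; cases "y' t0") simp_all
  then have toggle: "gf2_dot m (flip a) y = gf2_dot m (flip a) y' \<longleftrightarrow> gf2_dot m a y \<noteq> gf2_dot m a y'" for a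
    unfolding flip_def gf2_dot_flip[OF assms(1)]
    by (cases "gf2_dot m a y"; cases "gf2_dot m a y'"; cases "y t0"; cases "y' t0") simp_all
  have flip_closed: "flip a \<in> gf2_vectors m" if "a \<in> gf2_vectors m" for a
    using that assms(1) by (auto simp: gf2_vectors_def flip_def PiE_iff extensional_def)
  have "bij_betw flip Z (gf2_vectors m - Z)"
    by (rule bij_betwI[where g = flip]) (auto simp: Z_def toggle flip_closed, auto simp: flip_def)
  then have "card Z = card (gf2_vectors m - Z)"
    by (rule bij_betw_same_card)
  also have "\<dots> = 2 ^ m - card Z"
    by (simp add: card_Diff_subset Z_def finite_gf2_vectors card_gf2_vectors)
  finally show ?thesis
    using card_mono[OF finite_gf2_vectors, of Z] by (simp add: Z_def card_gf2_vectors)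
qed

lemma index_vec_differ:
  assumes "i \<in> {1..2^m}" "i' \<in> {1..2^m}" "i \<noteq> i'"
  shows "\<exists>t<m. index_vec i t \<noteq> index_vec i' t"
proof (rule ccontr)
  assume "\<not> ?thesis"
  then have "take_bit m (i - 1) = take_bit m (i' - 1)"
    by (intro bit_eqI) (auto simp: bit_take_bit_iff index_vec_def)
  moreover have "take_bit m (i - 1) = i - 1" "take_bit m (i' - 1) = i' - 1"
    using assms by (auto simp: take_bit_nat_eq_self_iff)
  ultimately show False
    using assms by auto
qed

definition filter_blocks :: "nat \<Rightarrow> nat \<Rightarrow> ((nat \<Rightarrow> nat \<Rightarrow> bit) \<times> (nat \<Rightarrow> bit)) set" where
  "filter_blocks r m = PiE {..<r} (\<lambda>_. gf2_vectors m) \<times> PiE {..<r} (\<lambda>_. UNIV)"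

definition vanishes_at :: "nat \<Rightarrow> nat \<Rightarrow> (nat \<Rightarrow> bit) \<Rightarrow> ((nat \<Rightarrow> nat \<Rightarrow> bit) \<times> (nat \<Rightarrow> bit)) set" where
  "vanishes_at r m y = {Ab. \<forall>s<r. gf2_dot m (fst Ab s) y + snd Ab s = 0}"

lemma finite_filter_blocks: "finite (filter_blocks r m)"
  unfolding filter_blocks_def by (intro finite_cartesian_product finite_PiE) (simp_all add: finite_gf2_vectors UNIV_bit)

lemma card_filter_blocks: "card (filter_blocks r m) = (2 ^ m) ^ r * 2 ^ r"
  by (simp add: filter_blocks_def card_cartesian_product card_PiE card_gf2_vectors card_UNIV_bit)

lemma filter_blocks_nonempty: "filter_blocks r m \<noteq> {}"
  by (metis card.empty card_filter_blocks mult_is_0 power_not_zero zero_neq_numeral)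

text \<open>On blocks vanishing at y the vector b is determined by A, so they are counted by A alone.\<close>
lemma card_vanishes_at_matrix_in:
  "card (filter_blocks r m \<inter> vanishes_at r m y \<inter> {Ab. fst Ab \<in> M})
     = card (PiE {..<r} (\<lambda>_. gf2_vectors m) \<inter> M)"
proof -
  let ?S = "filter_blocks r m \<inter> vanishes_at r m y \<inter> {Ab. fst Ab \<in> M}"
  have offset: "snd Ab = restrict (\<lambda>s. gf2_dot m (fst Ab s) y) {..<r}"
    if "Ab \<in> filter_blocks r m" "Ab \<in> vanishes_at r m y" for Ab
  proof
    fix s
    show "snd Ab s = restrict (\<lambda>s. gf2_dot m (fst Ab s) y) {..<r} s"
    proof (cases "s < r")
      case True
      then have "gf2_dot m (fst Ab s) y + snd Ab s = 0"
        using that(2) unfolding vanishes_at_def by blast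
      then show ?thesis
        using True by (simp add: bit_add_eq_0_iff)
    next
      case False
      have extensional: "snd Ab \<in> PiE {..<r} (\<lambda>_. UNIV)"
        using that(1) unfolding filter_blocks_def by (rule mem_Times_iff[THEN iffD1, THEN conjunct2])
      have "s \<notin> {..<r}"
        using False by simp
      then show ?thesis
        using PiE_arb[OF extensional] by simp
    qed
  qed
  have inj: "inj_on fst ?S"
  proof (rule inj_onI)
    fix x x' assume "x \<in> ?S" "x' \<in> ?S" "fst x = fst x'"
    then show "x = x'"
      using offset[of x] offset[of x'] by (intro prod_eqI) simp_all
  qed
  have image: "fst ` ?S = PiE {..<r} (\<lambda>_. gf2_vectors m) \<inter> M"
  proof (intro equalityI subsetI)
    fix A assume "A \<in> PiE {..<r} (\<lambda>_. gf2_vectors m) \<inter> M"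
    moreover have "restrict (\<lambda>s. gf2_dot m (A s) y) {..<r} \<in> PiE {..<r} (\<lambda>_. UNIV)"
      by simp
    ultimately have "(A, restrict (\<lambda>s. gf2_dot m (A s) y) {..<r}) \<in> ?S"
      unfolding filter_blocks_def vanishes_at_def by (simp add: bit_add_eq_0_iff)
    then show "A \<in> fst ` ?S"
      by (rule image_eqI[rotated]) simp
  next
    fix A assume "A \<in> fst ` ?S"
    then obtain b where "(A, b) \<in> filter_blocks r m" "A \<in> M"
      by force
    then show "A \<in> PiE {..<r} (\<lambda>_. gf2_vectors m) \<inter> M"
      unfolding filter_blocks_def by blast
  qed
  show ?thesis
    using card_image[OF inj] unfolding image by (rule sym)
qed

lemma card_vanishes_at:
  "card (filter_blocks r m \<inter> vanishes_at r m y) = card (filter_blocks r m) * (1/2) ^ r"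
proof -
  have "card (filter_blocks r m \<inter> vanishes_at r m y) = card (PiE {..<r} (\<lambda>_. gf2_vectors m))"
    using card_vanishes_at_matrix_in[of r m y UNIV] by simp
  then show ?thesis
    by (simp add: card_PiE card_gf2_vectors card_filter_blocks power_one_over)
qed

lemma card_vanishes_at_both:
  assumes "t0 < m" "y t0 \<noteq> y' t0"
  shows "card (filter_blocks r m \<inter> (vanishes_at r m y \<inter> vanishes_at r m y'))
           = card (filter_blocks r m) * ((1/2) ^ r)\<^sup>2"
proof -
  define Z where "Z = {a \<in> gf2_vectors m. gf2_dot m a y = gf2_dot m a y'}"
  have "2 * card Z = 2 ^ m"
    unfolding Z_def by (rule card_gf2_dot_agree[of t0 m y y', OF assms])
  then have card_Z: "real (card Z) = 2 ^ m / 2"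
    by (metis nonzero_mult_div_cancel_left of_nat_mult of_nat_numeral of_nat_power zero_neq_numeral)
  have "filter_blocks r m \<inter> (vanishes_at r m y \<inter> vanishes_at r m y')
      = filter_blocks r m \<inter> vanishes_at r m y \<inter> {Ab. fst Ab \<in> {A. \<forall>s<r. A s \<in> Z}}"
    unfolding filter_blocks_def vanishes_at_def Z_def
    by (auto simp: PiE_iff bit_add_eq_0_iff)
  moreover have "PiE {..<r} (\<lambda>_. gf2_vectors m) \<inter> {A. \<forall>s<r. A s \<in> Z} = PiE {..<r} (\<lambda>_. Z)"
    unfolding Z_def by (auto simp: PiE_iff)
  ultimately have "card (filter_blocks r m \<inter> (vanishes_at r m y \<inter> vanishes_at r m y')) = card Z ^ r"
    using card_vanishes_at_matrix_in[of r m y "{A. \<forall>s<r. A s \<in> Z}"] by (simp add: card_PiE)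
  also have "real \<dots> = real ((2 ^ m) ^ r * 2 ^ r) * ((1/2) ^ r)\<^sup>2"
    unfolding of_nat_power card_Z by (simp add: power_divide power_mult_distrib power2_eq_square field_simps)
  finally show ?thesis
    by (simp only: card_filter_blocks)
qed

lemma card_no_common_surviving_index_le_half:
  assumes "finite U" "W \<subseteq> U" "(2::real) \<le> 2 ^ m * ((1/2) ^ r) ^ card W"
  shows "card {x \<in> PiE U (\<lambda>_. filter_blocks r m).
                \<forall>i\<in>{1..2^m}. \<exists>w\<in>W. x w \<notin> vanishes_at r m (index_vec i)}
           \<le> card (PiE U (\<lambda>_. filter_blocks r m)) / 2"
proof -
  let ?S = "PiE U (\<lambda>_. filter_blocks r m)"
  let ?I = "{1..(2::nat)^m}"
  define E where "E i = {x. \<forall>w\<in>W. x w \<in> vanishes_at r m (index_vec i)}" for i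
  define p :: real where "p = ((1/2) ^ r) ^ card W"
  have single: "card (?S \<inter> E i) = card ?S * p" for i
    unfolding E_def p_def
    by (rule card_PiE_constrained[OF assms(1,2) finite_filter_blocks card_vanishes_at])
  have pair: "card (?S \<inter> E i \<inter> E i') = card ?S * p\<^sup>2" if distinct: "i \<in> ?I" "i' \<in> ?I" "i \<noteq> i'" for i i'
  proof -
    obtain t where "t < m" "index_vec i t \<noteq> index_vec i' t"
      using index_vec_differ[OF distinct] by blast
    then have "card (?S \<inter> {x. \<forall>w\<in>W. x w \<in> vanishes_at r m (index_vec i) \<inter> vanishes_at r m (index_vec i')})
        = card ?S * (((1/2) ^ r)\<^sup>2) ^ card W"
      by (intro card_PiE_constrained[OF assms(1,2) finite_filter_blocks] card_vanishes_at_both)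
    moreover have "?S \<inter> E i \<inter> E i' = ?S \<inter> {x. \<forall>w\<in>W. x w \<in> vanishes_at r m (index_vec i) \<inter> vanishes_at r m (index_vec i')}"
      by (auto simp: E_def)
    ultimately show ?thesis
      by (simp add: p_def power_mult[symmetric] ac_simps)
  qed
  have "card {x\<in>?S. \<forall>i\<in>?I. x \<notin> E i} \<le> card ?S / (card ?I * p)"
    by (rule card_avoiding_pairwise_independent[OF _ _ _ _ single pair])
      (simp_all add: finite_PiE assms(1) finite_filter_blocks p_def)
  also have "\<dots> \<le> card ?S / 2"
    using assms(3) by (intro divide_left_mono) (simp_all add: p_def)
  finally show ?thesis
    by (simp add: E_def)
qed

lemma mem_surv_set_iff:
  "u \<in> surv_set V \<Gamma> r m \<omega> j i \<longleftrightarrow> u \<in> V \<and> (\<forall>w\<in>\<Gamma> u. \<omega> j w \<in> vanishes_at r m (index_vec i))"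
  by (simp add: surv_set_def vanishes_at_def)

lemma ff_space_eq_PiE: "ff_space beta r m U = PiE {..<beta} (\<lambda>_. PiE U (\<lambda>_. filter_blocks r m))"
  by (simp add: ff_space_def filter_blocks_def gf2_vectors_def)

lemma card_union_of_close_pair_le:
  fixes \<tau> :: real
  assumes "finite (\<Gamma> u)" "finite (\<Gamma> v)" "card (\<Gamma> u) = d" "card (\<Gamma> v) = d"
    and "close_pair \<Gamma> \<tau> d u v"
  shows "real (card (\<Gamma> u \<union> \<Gamma> v)) \<le> (2 - \<tau>) * d"
proof -
  have "real (card (\<Gamma> u \<union> \<Gamma> v)) + card (\<Gamma> u \<inter> \<Gamma> v) = 2 * d"
    using card_Un_Int[OF assms(1,2)] assms(3,4) by simp
  then show ?thesis
    using assms(5) unfolding close_pair_def by (simp add: algebra_simps)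
qed

lemma prob_not_found_le:
  assumes "finite U" "\<forall>v\<in>V. \<Gamma> v \<subseteq> U" "\<forall>v\<in>V. card (\<Gamma> v) = d"
    and "real (2^m) * ((1/2) ^ r) powr ((2 - \<tau>) * real d) \<ge> 2"
    and "u \<in> V" "v \<in> V" "close_pair \<Gamma> \<tau> d u v"
  shows "measure_pmf.prob (ff_pmf beta r m U) {\<omega>. \<not> found V \<Gamma> beta r m \<omega> u v} \<le> (1/2) ^ beta"
proof -
  define W where "W = \<Gamma> u \<union> \<Gamma> v"
  let ?S = "PiE U (\<lambda>_. filter_blocks r m)"
  define Miss where "Miss = {x. \<forall>i\<in>{1..2^m}. \<exists>w\<in>W. x w \<notin> vanishes_at r m (index_vec i)}"
  have S: "finite ?S" "?S \<noteq> {}"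
    using assms(1) filter_blocks_nonempty by (simp_all add: finite_PiE finite_filter_blocks PiE_eq_empty_iff)
  have W: "W \<subseteq> U" "finite W"
    using assms(1,2,5,6) by (auto simp: W_def intro: finite_subset)
  have "((1/2::real) ^ r) powr ((2 - \<tau>) * d) \<le> ((1/2) ^ r) powr card W"
    using card_union_of_close_pair_le[of \<Gamma> u v d \<tau>] assms(1,2,3,5,6,7) W(1)
    by (intro powr_mono') (auto simp: W_def power_le_one intro: finite_subset)
  then have "(2::real) \<le> 2 ^ m * ((1/2) ^ r) ^ card W"
    using assms(4) by (simp add: powr_realpow order_trans[OF _ mult_left_mono])
  then have miss: "card (?S \<inter> Miss) \<le> card ?S / 2"
    using card_no_common_surviving_index_le_half[OF assms(1) W(1)] by (simp add: Miss_def Int_def)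
  have "{\<omega>. \<not> found V \<Gamma> beta r m \<omega> u v} = {\<omega>. \<forall>j\<in>{..<beta}. \<omega> j \<in> Miss}"
    using assms(5,6) by (simp add: found_def mem_surv_set_iff Miss_def W_def) blast
  then have "measure_pmf.prob (ff_pmf beta r m U) {\<omega>. \<not> found V \<Gamma> beta r m \<omega> u v}
      = (card (?S \<inter> Miss) / card ?S) ^ beta"
    unfolding ff_pmf_def ff_space_eq_PiE by (simp add: prob_pmf_of_set_PiE_all[OF _ S])
  also have "\<dots> \<le> (1/2) ^ beta"
    using miss S by (intro power_mono) (auto simp: field_simps card_gt_0_iff)
  finally show ?thesis .
qed

lemma prob_all_ge_union_bound:
  fixes M :: "'a pmf" and \<epsilon> :: real
  assumes "finite C" "\<And>c. c \<in> C \<Longrightarrow> measure_pmf.prob M {\<omega>. \<not> P c \<omega>} \<le> \<epsilon>"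
  shows "measure_pmf.prob M {\<omega>. \<forall>c\<in>C. P c \<omega>} \<ge> 1 - card C * \<epsilon>"
proof -
  have "measure_pmf.prob M (\<Union>c\<in>C. {\<omega>. \<not> P c \<omega>}) \<le> (\<Sum>c\<in>C. measure_pmf.prob M {\<omega>. \<not> P c \<omega>})"
    by (rule measure_pmf.finite_measure_subadditive_finite[OF assms(1)]) auto
  also have "\<dots> \<le> card C * \<epsilon>"
    using sum_mono[of C _ "\<lambda>_. \<epsilon>"] assms(2) by simp
  moreover have events: "(\<Union>c\<in>C. {\<omega>. \<not> P c \<omega>}) = space (measure_pmf M) - {\<omega>. \<forall>c\<in>C. P c \<omega>}"
    by auto
  have "measure_pmf.prob M (\<Union>c\<in>C. {\<omega>. \<not> P c \<omega>}) = 1 - measure_pmf.prob M {\<omega>. \<forall>c\<in>C. P c \<omega>}"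
    unfolding events by (rule measure_pmf.prob_compl) simp
  ultimately show ?thesis
    by linarith
qed

lemma half_power_le_inverse_cube:
  fixes N :: real
  assumes "N > 0" "real beta \<ge> 3 * log 2 N"
  shows "(1/2) ^ beta \<le> 1 / N ^ 3"
proof -
  have "N ^ 3 = (2 powr log 2 N) powr 3"
    using assms(1) by (simp add: powr_realpow)
  also have "\<dots> = 2 powr (3 * log 2 N)"
    by (simp only: powr_powr mult.commute)
  also have "\<dots> \<le> 2 ^ beta"
    using assms(2) by (simp add: powr_realpow[symmetric])
  finally show ?thesis
    using assms(1) by (simp add: power_one_over field_simps)
qed

lemma prob_all_pairs_ge:
  fixes M :: "'a pmf"
  assumes "finite V" "V \<noteq> {}" "real beta \<ge> 3 * log 2 (card V)"
    and "\<And>u v. u \<in> V \<Longrightarrow> v \<in> V \<Longrightarrow> R u v \<Longrightarrow> measure_pmf.prob M {\<omega>. \<not> P u v \<omega>} \<le> (1/2) ^ beta"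
  shows "measure_pmf.prob M {\<omega>. \<forall>u\<in>V. \<forall>v\<in>V. R u v \<longrightarrow> P u v \<omega>} \<ge> 1 - 1 / card V"
proof -
  define C where "C = {(u, v) \<in> V \<times> V. R u v}"
  have "C \<subseteq> V \<times> V"
    by (auto simp: C_def)
  then have "finite C" "card C \<le> card V ^ 2"
    using assms(1) card_mono[of "V \<times> V" C] by (auto simp: card_cartesian_product power2_eq_square
        intro: finite_subset)
  have "1 - 1 / card V \<le> 1 - real (card V) ^ 2 * (1/2) ^ beta"
    using half_power_le_inverse_cube[of "card V" beta] assms(1-3)
    by (simp add: card_gt_0_iff field_simps power_one_over power2_eq_square power3_eq_cube)
  also have "\<dots> \<le> 1 - card C * (1/2) ^ beta"
    using \<open>card C \<le> card V ^ 2\<close> by (simp add: mult_right_mono flip: of_nat_power)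
  also have "\<dots> \<le> measure_pmf.prob M {\<omega>. \<forall>c\<in>C. P (fst c) (snd c) \<omega>}"
    using assms(4) \<open>finite C\<close> by (intro prob_all_ge_union_bound) (auto simp: C_def)
  also have "{\<omega>. \<forall>c\<in>C. P (fst c) (snd c) \<omega>} = {\<omega>. \<forall>u\<in>V. \<forall>v\<in>V. R u v \<longrightarrow> P u v \<omega>}"
    by (auto simp: C_def)
  finally show ?thesis .
qed

theorem mainTheorem5:
  fixes U :: "'u set" and V :: "'v set" and \<Gamma> :: "'v \<Rightarrow> 'u set"
    and d m r beta :: nat and \<tau> :: real
  assumes "finite U" and "finite V"
    and "\<forall>v \<in> V. \<Gamma> v \<subseteq> U"
    and "d \<ge> 1" and "\<forall>v \<in> V. card (\<Gamma> v) = d"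
    and "m > 0" and "r > 0"
    and "0 < \<tau>" and "\<tau> \<le> 1"
    and "real (2^m) * ((1/2) ^ r) powr ((2 - \<tau>) * real d) \<ge> 2"
    and "beta \<ge> 1"
  shows "(\<forall>u \<in> V. \<forall>v \<in> V. close_pair \<Gamma> \<tau> d u v \<longrightarrow>
            measure_pmf.prob (ff_pmf beta r m U) {\<omega>. \<not> found V \<Gamma> beta r m \<omega> u v}
              \<le> (1/2) ^ beta)
       \<and> (card V \<ge> 2 \<and> real beta \<ge> 3 * log 2 (real (card V)) \<longrightarrow>
            measure_pmf.prob (ff_pmf beta r m U)
              {\<omega>. \<forall>u \<in> V. \<forall>v \<in> V. close_pair \<Gamma> \<tau> d u v \<longrightarrow> found V \<Gamma> beta r m \<omega> u v}
              \<ge> 1 - 1 / real (card V))"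
proof
  show "\<forall>u\<in>V. \<forall>v\<in>V. close_pair \<Gamma> \<tau> d u v \<longrightarrow>
      measure_pmf.prob (ff_pmf beta r m U) {\<omega>. \<not> found V \<Gamma> beta r m \<omega> u v} \<le> (1/2) ^ beta"
    using prob_not_found_le[OF assms(1,3,5,10)] by blast
  show "card V \<ge> 2 \<and> real beta \<ge> 3 * log 2 (real (card V)) \<longrightarrow>
      measure_pmf.prob (ff_pmf beta r m U)
        {\<omega>. \<forall>u\<in>V. \<forall>v\<in>V. close_pair \<Gamma> \<tau> d u v \<longrightarrow> found V \<Gamma> beta r m \<omega> u v} \<ge> 1 - 1 / real (card V)"
  proof
    assume "card V \<ge> 2 \<and> real beta \<ge> 3 * log 2 (real (card V))"
    then show "measure_pmf.prob (ff_pmf beta r m U)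
        {\<omega>. \<forall>u\<in>V. \<forall>v\<in>V. close_pair \<Gamma> \<tau> d u v \<longrightarrow> found V \<Gamma> beta r m \<omega> u v} \<ge> 1 - 1 / real (card V)"
      using prob_not_found_le[OF assms(1,3,5,10)] by (intro prob_all_pairs_ge[OF assms(2)]) auto
  qed
qed

end
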